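(* Let $S$ be an inverse semigroup that is a mirror semigroup, with semilattice of idempotents $\Sigma=\Sigma(S)$. Then $S$ is separately Scott-continuous if and only if $\Sigma$ is meet-continuous.
   Context: An inverse semigroup is a semigroup $S$ in which every $s$ has a unique $s^*$ with $ss^*s=s$ and $s^*ss^*=s^*$. $\Sigma(S)$ is the set of idempotents of $S$. The intrinsic order is $s\leqslant t$ iff $s=t\epsilon$ for some idempotent $\epsilon$. A subset of a poset is directed if it is nonempty and any two of its elements have an upper bound in it. $S$ is a mirror semigroup if every directed subset of $\Sigma$ having a supremum in $(\Sigma,\leqslant)$ also has a supremum in $(S,\leqslant)$. $\bigvee A$ denotes the supremum of $A$ in $S$. $S$ is separately Scott-continuous if for every directed subset $D\subseteq S$ that has a supremum and every $s\in S$, $\bigvee(Ds)$ exists and equals $(\bigvee D)s$. $\Sigma$ is meet-continuous if for every directed subset $\Delta\subseteq\Sigma$ having a supremum in $\Sigma$ and every $\epsilon\in\Sigma$, the supremum of $\Delta\epsilon$ in $\Sigma$ exists and equals $(\sup\Delta)\epsilon$ (i.e. the same property as separate Scott-continuity, for the semilattice $\Sigma$). *)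

theory Defs
  imports Main
begin

definition inverse_semigroup :: "('a \<Rightarrow> 'a \<Rightarrow> 'a) \<Rightarrow> bool" where
  "inverse_semigroup m \<longleftrightarrow>
     (\<forall>a b c. m (m a b) c = m a (m b c)) \<and>
     (\<forall>s. \<exists>!t. m (m s t) s = s \<and> m (m t s) t = t)"

definition idems :: "('a \<Rightarrow> 'a \<Rightarrow> 'a) \<Rightarrow> 'a set" where
  "idems m = {e. m e e = e}"

definition intr_le :: "('a \<Rightarrow> 'a \<Rightarrow> 'a) \<Rightarrow> 'a \<Rightarrow> 'a \<Rightarrow> bool" where
  "intr_le m s t \<longleftrightarrow> (\<exists>e\<in>idems m. s = m t e)"

definition directed_by :: "('a \<Rightarrow> 'a \<Rightarrow> bool) \<Rightarrow> 'a set \<Rightarrow> bool" where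
  "directed_by R D \<longleftrightarrow> D \<noteq> {} \<and> (\<forall>x\<in>D. \<forall>y\<in>D. \<exists>z\<in>D. R x z \<and> R y z)"

definition is_sup_in :: "('a \<Rightarrow> 'a \<Rightarrow> bool) \<Rightarrow> 'a set \<Rightarrow> 'a set \<Rightarrow> 'a \<Rightarrow> bool" where
  "is_sup_in R A X x \<longleftrightarrow> x \<in> A \<and> (\<forall>y\<in>X. R y x) \<and> (\<forall>z\<in>A. (\<forall>y\<in>X. R y z) \<longrightarrow> R x z)"

definition mirror_semigroup :: "('a \<Rightarrow> 'a \<Rightarrow> 'a) \<Rightarrow> bool" where
  "mirror_semigroup m \<longleftrightarrow>
     (\<forall>D. D \<subseteq> idems m \<and> directed_by (intr_le m) D \<and> (\<exists>x. is_sup_in (intr_le m) (idems m) D x)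
          \<longrightarrow> (\<exists>x. is_sup_in (intr_le m) UNIV D x))"

definition sep_scott_continuous :: "('a \<Rightarrow> 'a \<Rightarrow> 'a) \<Rightarrow> bool" where
  "sep_scott_continuous m \<longleftrightarrow>
     (\<forall>D x s. directed_by (intr_le m) D \<and> is_sup_in (intr_le m) UNIV D x
          \<longrightarrow> is_sup_in (intr_le m) UNIV ((\<lambda>d. m d s) ` D) (m x s))"

definition meet_continuous :: "('a \<Rightarrow> 'a \<Rightarrow> 'a) \<Rightarrow> bool" where
  "meet_continuous m \<longleftrightarrow>
     (\<forall>\<Delta> x e. \<Delta> \<subseteq> idems m \<and> directed_by (intr_le m) \<Delta> \<and> is_sup_in (intr_le m) (idems m) \<Delta> x
          \<and> e \<in> idems m
          \<longrightarrow> is_sup_in (intr_le m) (idems m) ((\<lambda>d. m d e) ` \<Delta>) (m x e))"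

end

theory Submission
  imports Defs
begin

text \<open>In a mirror semigroup the supremum in \<open>\<Sigma>\<close> of a directed set of idempotents is also its
  supremum in \<open>S\<close>, which gives meet continuity from separate Scott continuity.
  Conversely, let \<open>D\<close> be directed with supremum \<open>x\<close> and let \<open>s \<in> S\<close>. The sources \<open>d\<^sup>* d\<close>
  have supremum \<open>x\<^sup>* x\<close> in \<open>\<Sigma>\<close>; meeting with \<open>s s\<^sup>*\<close> and conjugating by \<open>s\<close> shows that
  the sources \<open>(d s)\<^sup>* (d s)\<close> have supremum \<open>(x s)\<^sup>* (x s)\<close> in \<open>\<Sigma>\<close>, hence in \<open>S\<close>. Finally, an
  upper bound of \<open>D s\<close> whose source is the supremum of the sources of \<open>D s\<close> is the
  supremum of \<open>D s\<close>.\<close>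

lemma directed_by_image:
  assumes "directed_by R D"
    and "\<And>a b. a \<in> D \<Longrightarrow> b \<in> D \<Longrightarrow> R a b \<Longrightarrow> R' (f a) (f b)"
  shows "directed_by R' (f ` D)"
proof -
  have "f ` D \<noteq> {}" using assms(1) unfolding directed_by_def by blast
  moreover have "\<exists>z\<in>f ` D. R' y z \<and> R' y' z"
    if yD: "y \<in> f ` D" "y' \<in> f ` D" for y y'
  proof -
    obtain a b where ab: "a \<in> D" "b \<in> D" "y = f a" "y' = f b" using yD by blast
    then obtain c where "c \<in> D" "R a c" "R b c" using assms(1) unfolding directed_by_def by blast
    then show ?thesis using assms(2) ab by blast
  qed
  ultimately show ?thesis unfolding directed_by_def by blast
qed

lemma is_sup_inD:
  assumes "is_sup_in R A X x"
  shows is_sup_in_mem: "x \<in> A" and is_sup_in_upper: "y \<in> X \<Longrightarrow> R y x"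
    and is_sup_in_least: "z \<in> A \<Longrightarrow> (\<And>y. y \<in> X \<Longrightarrow> R y z) \<Longrightarrow> R x z"
  using assms unfolding is_sup_in_def by auto

lemma is_sup_in_restrict:
  "is_sup_in R UNIV X x \<Longrightarrow> x \<in> A \<Longrightarrow> is_sup_in R A X x"
  unfolding is_sup_in_def by blast

locale inverse_semigrp =
  fixes m :: "'a \<Rightarrow> 'a \<Rightarrow> 'a" (infixl "\<cdot>" 70)
  assumes inverse_semigroup: "inverse_semigroup m"
begin

lemma assoc: "a \<cdot> b \<cdot> c = a \<cdot> (b \<cdot> c)"
  using inverse_semigroup unfolding inverse_semigroup_def by blast

definition star :: "'a \<Rightarrow> 'a" where
  "star s = (THE t. s \<cdot> t \<cdot> s = s \<and> t \<cdot> s \<cdot> t = t)"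

lemma star_unique_ex: "\<exists>!t. s \<cdot> t \<cdot> s = s \<and> t \<cdot> s \<cdot> t = t"
  using inverse_semigroup unfolding inverse_semigroup_def by blast

lemma mult_star_mult: "s \<cdot> star s \<cdot> s = s"
  and star_mult_star: "star s \<cdot> s \<cdot> star s = star s"
  using theI'[OF star_unique_ex[of s]] unfolding star_def by auto

lemma star_unique: "s \<cdot> t \<cdot> s = s \<Longrightarrow> t \<cdot> s \<cdot> t = t \<Longrightarrow> star s = t"
  using star_unique_ex[of s] mult_star_mult star_mult_star by blast

lemma mem_idems: "e \<in> idems m \<longleftrightarrow> e \<cdot> e = e"
  unfolding idems_def by simp

lemma star_idem: "e \<in> idems m \<Longrightarrow> star e = e"
  using star_unique[of e e] by (simp add: mem_idems)

lemma star_star: "star (star s) = s"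
  by (intro star_unique star_mult_star mult_star_mult)

lemma star_mult_self_idem: "star s \<cdot> s \<in> idems m"
  unfolding mem_idems by (metis assoc star_mult_star)

lemma mult_star_self_idem: "s \<cdot> star s \<in> idems m"
  unfolding mem_idems by (metis assoc mult_star_mult)

text \<open>The classical argument: the inverse b of e f satisfies b = f b e, which makes b
  idempotent, and an idempotent is its own inverse.\<close>
lemma idems_mult_closed:
  assumes e: "e \<in> idems m" and f: "f \<in> idems m"
  shows "e \<cdot> f \<in> idems m"
proof -
  let ?a = "e \<cdot> f" let ?b = "star ?a"
  have ee: "e \<cdot> (e \<cdot> z) = e \<cdot> z" and ff: "f \<cdot> (f \<cdot> z) = f \<cdot> z" for z
    using e f by (simp_all add: mem_idems flip: assoc)
  have "?a \<cdot> (f \<cdot> ?b \<cdot> e) \<cdot> ?a = ?a \<cdot> ?b \<cdot> ?a"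
    by (simp add: assoc ee ff)
  then have 1: "?a \<cdot> (f \<cdot> ?b \<cdot> e) \<cdot> ?a = ?a" by (simp add: mult_star_mult)
  have "f \<cdot> ?b \<cdot> e \<cdot> ?a \<cdot> (f \<cdot> ?b \<cdot> e) = f \<cdot> (?b \<cdot> ?a \<cdot> ?b) \<cdot> e"
    by (simp add: assoc ee ff)
  then have 2: "f \<cdot> ?b \<cdot> e \<cdot> ?a \<cdot> (f \<cdot> ?b \<cdot> e) = f \<cdot> ?b \<cdot> e" by (simp add: star_mult_star)
  have b: "?b = f \<cdot> ?b \<cdot> e" using star_unique[OF 1 2] .
  have "?b \<cdot> ?b = f \<cdot> (?b \<cdot> ?a \<cdot> ?b) \<cdot> e"
    by (subst (1 2) b) (simp add: assoc)
  then have "?b \<in> idems m" using b by (simp add: mem_idems star_mult_star)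
  then show ?thesis
    using star_idem star_star by (metis (no_types))
qed

lemma idems_commute:
  assumes e: "e \<in> idems m" and f: "f \<in> idems m"
  shows "e \<cdot> f = f \<cdot> e"
proof -
  have ef: "e \<cdot> f \<in> idems m" and fe: "f \<cdot> e \<in> idems m"
    using idems_mult_closed e f by auto
  have ee: "e \<cdot> (e \<cdot> z) = e \<cdot> z" and ff: "f \<cdot> (f \<cdot> z) = f \<cdot> z" for z
    using e f by (simp_all add: mem_idems flip: assoc)
  have "e \<cdot> f \<cdot> (f \<cdot> e) \<cdot> (e \<cdot> f) = e \<cdot> f \<cdot> (e \<cdot> f)"
    "f \<cdot> e \<cdot> (e \<cdot> f) \<cdot> (f \<cdot> e) = f \<cdot> e \<cdot> (f \<cdot> e)"
    by (simp_all add: assoc ee ff)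
  then have "star (e \<cdot> f) = f \<cdot> e"
    using ef fe by (intro star_unique) (simp_all add: mem_idems)
  then show ?thesis using star_idem[OF ef] by simp
qed

lemma star_mult: "star (s \<cdot> t) = star t \<cdot> star s"
proof (rule star_unique)
  have c: "t \<cdot> star t \<cdot> (star s \<cdot> s) = star s \<cdot> s \<cdot> (t \<cdot> star t)"
    using idems_commute star_mult_self_idem mult_star_self_idem by blast
  have "s \<cdot> t \<cdot> (star t \<cdot> star s) \<cdot> (s \<cdot> t) = s \<cdot> (t \<cdot> star t \<cdot> (star s \<cdot> s)) \<cdot> t"
    by (simp add: assoc)
  also have "\<dots> = s \<cdot> (star s \<cdot> s \<cdot> (t \<cdot> star t)) \<cdot> t" by (simp only: c)
  also have "\<dots> = (s \<cdot> star s \<cdot> s) \<cdot> (t \<cdot> star t \<cdot> t)" by (simp add: assoc)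
  finally show "s \<cdot> t \<cdot> (star t \<cdot> star s) \<cdot> (s \<cdot> t) = s \<cdot> t" by (simp add: mult_star_mult)
  have "star t \<cdot> star s \<cdot> (s \<cdot> t) \<cdot> (star t \<cdot> star s)
      = star t \<cdot> (star s \<cdot> s \<cdot> (t \<cdot> star t)) \<cdot> star s"
    by (simp add: assoc)
  also have "\<dots> = star t \<cdot> (t \<cdot> star t \<cdot> (star s \<cdot> s)) \<cdot> star s" by (simp only: c)
  also have "\<dots> = (star t \<cdot> t \<cdot> star t) \<cdot> (star s \<cdot> s \<cdot> star s)" by (simp add: assoc)
  finally show "star t \<cdot> star s \<cdot> (s \<cdot> t) \<cdot> (star t \<cdot> star s) = star t \<cdot> star s"
    by (simp add: star_mult_star)
qed

lemma conj_idem: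
  assumes e: "e \<in> idems m"
  shows "star s \<cdot> e \<cdot> s \<in> idems m"
proof -
  have "star s \<cdot> e \<cdot> s \<cdot> (star s \<cdot> e \<cdot> s) = star s \<cdot> (e \<cdot> (s \<cdot> star s)) \<cdot> e \<cdot> s"
    by (simp add: assoc)
  also have "\<dots> = star s \<cdot> (s \<cdot> star s \<cdot> e) \<cdot> e \<cdot> s"
    using idems_commute[OF e mult_star_self_idem] by simp
  also have "\<dots> = (star s \<cdot> s \<cdot> star s) \<cdot> (e \<cdot> e) \<cdot> s" by (simp add: assoc)
  finally show ?thesis using e by (simp add: mem_idems star_mult_star)
qed

lemma star_cancel:
  "s \<cdot> (star s \<cdot> s) = s" "s \<cdot> (star s \<cdot> (s \<cdot> z)) = s \<cdot> z"
  "star s \<cdot> (s \<cdot> star s) = star s" "star s \<cdot> (s \<cdot> (star s \<cdot> z)) = star s \<cdot> z"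
  by (simp_all add: mult_star_mult star_mult_star flip: assoc)

lemma star_mult_self_mult_idem:
  assumes e: "e \<in> idems m"
  shows "star (t \<cdot> e) \<cdot> (t \<cdot> e) = star t \<cdot> t \<cdot> e"
proof -
  have "star (t \<cdot> e) \<cdot> (t \<cdot> e) = e \<cdot> (star t \<cdot> t) \<cdot> e"
    by (simp add: star_mult star_idem[OF e] assoc)
  also have "\<dots> = star t \<cdot> t \<cdot> e \<cdot> e"
    using idems_commute[OF e star_mult_self_idem] by simp
  finally show ?thesis using e by (simp add: assoc mem_idems)
qed

lemma le_iff_eq_mult_star_mult_self: "intr_le m s t \<longleftrightarrow> s = t \<cdot> (star s \<cdot> s)"
proof
  assume "intr_le m s t"
  then obtain e where e: "e \<in> idems m" and s: "s = t \<cdot> e" unfolding intr_le_def by blast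
  then show "s = t \<cdot> (star s \<cdot> s)"
    by (simp add: star_mult_self_mult_idem assoc star_cancel)
next
  assume "s = t \<cdot> (star s \<cdot> s)"
  then show "intr_le m s t" unfolding intr_le_def using star_mult_self_idem by blast
qed

lemma le_mult_idem: "e \<in> idems m \<Longrightarrow> intr_le m (s \<cdot> e) s"
  unfolding intr_le_def by blast

lemma le_idem_mult:
  assumes f: "f \<in> idems m"
  shows "intr_le m (f \<cdot> t) t"
proof -
  have "f \<cdot> t = f \<cdot> (t \<cdot> star t) \<cdot> t" by (simp add: assoc star_cancel)
  also have "\<dots> = t \<cdot> (star t \<cdot> f \<cdot> t)"
    using idems_commute[OF f mult_star_self_idem] by (simp add: assoc)
  finally show ?thesis using le_mult_idem[OF conj_idem[OF f]] by simp
qed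

lemma le_eq_mult_star_left: "intr_le m s t \<Longrightarrow> s = s \<cdot> star s \<cdot> t"
proof -
  assume "intr_le m s t"
  then obtain e where e: "e \<in> idems m" and s: "s = t \<cdot> e" unfolding intr_le_def by blast
  have "s \<cdot> star s \<cdot> t = t \<cdot> (e \<cdot> e \<cdot> (star t \<cdot> t))"
    by (simp add: s star_mult star_idem[OF e] assoc)
  also have "\<dots> = t \<cdot> (e \<cdot> (star t \<cdot> t))" using e by (simp add: mem_idems)
  also have "\<dots> = t \<cdot> (star t \<cdot> t) \<cdot> e"
    using idems_commute[OF e star_mult_self_idem] by (simp add: assoc)
  finally show ?thesis using s by (simp add: assoc star_cancel)
qed

lemma le_antisym:
  assumes "intr_le m s t" "intr_le m t s"
  shows "s = t"
proof -
  obtain e where e: "e \<in> idems m" and s: "s = t \<cdot> e" using assms(1) unfolding intr_le_def by blast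
  obtain f where f: "f \<in> idems m" and t: "t = s \<cdot> f" using assms(2) unfolding intr_le_def by blast
  have t_ef: "t = t \<cdot> (e \<cdot> f)" by (metis assoc s t)
  have "s = t \<cdot> (e \<cdot> f) \<cdot> e" using s t_ef by simp
  also have "\<dots> = t \<cdot> (e \<cdot> (f \<cdot> e))" by (simp add: assoc)
  also have "\<dots> = t \<cdot> (e \<cdot> e \<cdot> f)" using idems_commute[OF f e] by (simp add: assoc)
  also have "\<dots> = t" using e t_ef by (simp add: mem_idems)
  finally show ?thesis .
qed

lemma idems_le_iff:
  assumes e: "e \<in> idems m" and f: "f \<in> idems m"
  shows "intr_le m e f \<longleftrightarrow> f \<cdot> e = e"
proof
  assume "intr_le m e f"
  then obtain g where "e = f \<cdot> g" unfolding intr_le_def by blast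
  then show "f \<cdot> e = e" using f by (simp add: mem_idems flip: assoc)
next
  assume "f \<cdot> e = e"
  then show "intr_le m e f" unfolding intr_le_def using e by (metis mem_idems)
qed

lemma le_idems: "t \<in> idems m \<Longrightarrow> intr_le m s t \<Longrightarrow> s \<in> idems m"
  unfolding intr_le_def using idems_mult_closed by blast

lemma le_mult_right:
  assumes "intr_le m s t"
  shows "intr_le m (s \<cdot> a) (t \<cdot> a)"
proof -
  have "s \<cdot> a = s \<cdot> star s \<cdot> t \<cdot> a"
    using le_eq_mult_star_left[OF assms] by (rule arg_cong[where f = "\<lambda>x. x \<cdot> a"])
  then show ?thesis using le_idem_mult[OF mult_star_self_idem, of s "t \<cdot> a"] by (simp add: assoc)
qed

lemma le_star_mult_self: "intr_le m s t \<Longrightarrow> intr_le m (star s \<cdot> s) (star t \<cdot> t)"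
  unfolding intr_le_def by (auto simp: star_mult_self_mult_idem)

lemma sup_in_idems_is_sup:
  assumes "mirror_semigroup m" "X \<subseteq> idems m" "directed_by (intr_le m) X"
    and x: "is_sup_in (intr_le m) (idems m) X x"
  shows "is_sup_in (intr_le m) UNIV X x"
proof -
  obtain y where y: "is_sup_in (intr_le m) UNIV X y"
    using assms unfolding mirror_semigroup_def by blast
  have "x \<in> idems m" and "intr_le m y x" using x y unfolding is_sup_in_def by auto
  then have "y \<in> idems m" by (rule le_idems)
  then have "intr_le m x y" using x y unfolding is_sup_in_def by blast
  with \<open>intr_le m y x\<close> have "y = x" by (rule le_antisym)
  with y show ?thesis by simp
qed

lemma sup_star_mult_self:
  assumes x: "is_sup_in (intr_le m) UNIV D x"
  shows "is_sup_in (intr_le m) (idems m) ((\<lambda>d. star d \<cdot> d) ` D) (star x \<cdot> x)"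
  unfolding is_sup_in_def
proof (intro conjI ballI impI)
  show "star x \<cdot> x \<in> idems m" by (rule star_mult_self_idem)
  show "intr_le m f (star x \<cdot> x)" if "f \<in> (\<lambda>d. star d \<cdot> d) ` D" for f
    using that x le_star_mult_self unfolding is_sup_in_def by blast
  fix g assume g: "g \<in> idems m" and ub: "\<forall>f\<in>(\<lambda>d. star d \<cdot> d) ` D. intr_le m f g"
  have "intr_le m d (x \<cdot> g)" if d: "d \<in> D" for d
  proof -
    have "intr_le m (star d \<cdot> d) g" using d ub by blast
    then have gd: "g \<cdot> (star d \<cdot> d) = star d \<cdot> d"
      using idems_le_iff[OF star_mult_self_idem g] by simp
    have "d = x \<cdot> (star d \<cdot> d)"
      using d x le_iff_eq_mult_star_mult_self unfolding is_sup_in_def by blast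
    also have "\<dots> = x \<cdot> g \<cdot> (star d \<cdot> d)" by (simp add: assoc gd)
    finally have "d = x \<cdot> g \<cdot> (star d \<cdot> d)" .
    then show ?thesis unfolding intr_le_def using star_mult_self_idem by blast
  qed
  then have "intr_le m x (x \<cdot> g)" using x unfolding is_sup_in_def by blast
  then have xg: "x \<cdot> g = x" using le_mult_idem[OF g] le_antisym by blast
  have "star x \<cdot> x = star x \<cdot> (x \<cdot> g)" using xg by simp
  also have "\<dots> = g \<cdot> (star x \<cdot> x)"
    using idems_commute[OF star_mult_self_idem g] by (simp flip: assoc)
  finally have "g \<cdot> (star x \<cdot> x) = star x \<cdot> x" by (rule sym)
  then show "intr_le m (star x \<cdot> x) g" using idems_le_iff[OF star_mult_self_idem g] by simp
qed

text \<open>Conjugation by \<open>s\<close> is an order isomorphism from the idempotents below \<open>s s\<^sup>*\<close>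
  onto those below \<open>s\<^sup>* s\<close>; its inverse is conjugation by \<open>s\<^sup>*\<close>.\<close>
lemma conj_sup_idems:
  assumes X: "X \<subseteq> idems m" and below: "\<And>f. f \<in> X \<Longrightarrow> intr_le m f (s \<cdot> star s)"
    and a: "is_sup_in (intr_le m) (idems m) X a"
  shows "is_sup_in (intr_le m) (idems m) ((\<lambda>f. star s \<cdot> f \<cdot> s) ` X) (star s \<cdot> a \<cdot> s)"
  unfolding is_sup_in_def
proof (intro conjI ballI impI)
  have aE: "a \<in> idems m" by (rule is_sup_in_mem[OF a])
  then show "star s \<cdot> a \<cdot> s \<in> idems m" by (rule conj_idem)
  have f_le: "s \<cdot> star s \<cdot> f = f" if f: "f \<in> X" for f
    using idems_le_iff[OF _ mult_star_self_idem] below[OF f] f X by (metis subsetD)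
  show "intr_le m h (star s \<cdot> a \<cdot> s)" if hX: "h \<in> (\<lambda>f. star s \<cdot> f \<cdot> s) ` X" for h
  proof -
    obtain f where f: "f \<in> X" and h: "h = star s \<cdot> f \<cdot> s" using hX by blast
    have "a \<cdot> f = f"
      using idems_le_iff[OF _ aE] is_sup_in_upper[OF a f] f X by (metis subsetD)
    have "star s \<cdot> a \<cdot> s \<cdot> h = star s \<cdot> (a \<cdot> (s \<cdot> star s \<cdot> f)) \<cdot> s"
      unfolding h by (simp add: assoc)
    also have "\<dots> = h" unfolding h by (simp only: f_le[OF f] \<open>a \<cdot> f = f\<close>)
    moreover have "h \<in> idems m" using h f X conj_idem by blast
    ultimately show ?thesis using idems_le_iff[OF _ conj_idem[OF aE]] by simp
  qed
  fix g assume g: "g \<in> idems m" and ub: "\<forall>h\<in>(\<lambda>f. star s \<cdot> f \<cdot> s) ` X. intr_le m h g"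
  define q where "q = s \<cdot> g \<cdot> star s"
  have qE: "q \<in> idems m" unfolding q_def using conj_idem[OF g, of "star s"] by (simp add: star_star)
  have "intr_le m f q" if f: "f \<in> X" for f
  proof -
    have fE: "f \<in> idems m" using f X by blast
    have "intr_le m (star s \<cdot> f \<cdot> s) g" using f ub by blast
    then have gsf: "g \<cdot> (star s \<cdot> f \<cdot> s) = star s \<cdot> f \<cdot> s"
      using idems_le_iff[OF conj_idem[OF fE] g] by simp
    have f_right: "f \<cdot> (s \<cdot> star s) = f"
      using idems_commute[OF fE mult_star_self_idem] f_le[OF f] by simp
    have "q \<cdot> f = s \<cdot> g \<cdot> star s \<cdot> (f \<cdot> (s \<cdot> star s))" unfolding q_def by (simp only: f_right)
    also have "\<dots> = s \<cdot> (g \<cdot> (star s \<cdot> f \<cdot> s)) \<cdot> star s" by (simp add: assoc)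
    also have "\<dots> = s \<cdot> star s \<cdot> f \<cdot> (s \<cdot> star s)" by (simp only: gsf) (simp add: assoc)
    also have "\<dots> = f" by (simp only: f_le[OF f] f_right)
    finally show ?thesis using idems_le_iff[OF fE qE] by simp
  qed
  then have "intr_le m a q" by (rule is_sup_in_least[OF a qE])
  then have qa: "q \<cdot> a = a" using idems_le_iff[OF aE qE] by simp
  have "star s \<cdot> a \<cdot> s = star s \<cdot> (q \<cdot> a) \<cdot> s" by (simp only: qa)
  also have "\<dots> = star s \<cdot> s \<cdot> g \<cdot> (star s \<cdot> a \<cdot> s)" unfolding q_def by (simp add: assoc)
  also have "\<dots> = g \<cdot> (star s \<cdot> s \<cdot> (star s \<cdot> a \<cdot> s))"
    using idems_commute[OF star_mult_self_idem g] by (simp add: assoc)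
  also have "\<dots> = g \<cdot> (star s \<cdot> a \<cdot> s)" by (simp add: assoc star_cancel)
  finally have "g \<cdot> (star s \<cdot> a \<cdot> s) = star s \<cdot> a \<cdot> s" by (rule sym)
  then show "intr_le m (star s \<cdot> a \<cdot> s) g" using idems_le_iff[OF conj_idem[OF aE] g] by simp
qed

lemma sup_if_sup_star_mult_self:
  assumes ub: "\<forall>e\<in>E. intr_le m e y"
    and h: "is_sup_in (intr_le m) UNIV ((\<lambda>e. star e \<cdot> e) ` E) (star y \<cdot> y)"
  shows "is_sup_in (intr_le m) UNIV E y"
  unfolding is_sup_in_def
proof (intro conjI ballI impI)
  show "y \<in> UNIV" "\<And>e. e \<in> E \<Longrightarrow> intr_le m e y" using ub by auto
  fix u assume ub_u: "\<forall>e\<in>E. intr_le m e u"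
  let ?h = "star y \<cdot> y"
  have hE: "?h \<in> idems m" by (rule star_mult_self_idem)
  have "intr_le m (star e \<cdot> e) (star y \<cdot> u)" if e: "e \<in> E" for e
  proof -
    let ?f = "star e \<cdot> e"
    have e_y: "e = y \<cdot> ?f" and e_u: "e = u \<cdot> ?f"
      using e ub ub_u le_iff_eq_mult_star_mult_self by blast+
    have "intr_le m ?f ?h" using e by (intro is_sup_in_upper[OF h]) blast
    then have "?h \<cdot> ?f = ?f" using idems_le_iff[OF star_mult_self_idem hE] by simp
    then have "?f = ?h \<cdot> ?f" by (rule sym)
    also have "\<dots> = star y \<cdot> (y \<cdot> ?f)" by (simp add: assoc)
    also have "\<dots> = star y \<cdot> (u \<cdot> ?f)" by (simp only: e_y[symmetric] e_u[symmetric])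
    also have "\<dots> = star y \<cdot> u \<cdot> ?f" by (simp add: assoc)
    finally show ?thesis unfolding intr_le_def using star_mult_self_idem by blast
  qed
  then have "intr_le m ?h (star y \<cdot> u)" by (intro is_sup_in_least[OF h]) auto
  then have "?h = star y \<cdot> u \<cdot> (star ?h \<cdot> ?h)" by (rule le_iff_eq_mult_star_mult_self[THEN iffD1])
  then have h_eq: "?h = star y \<cdot> u \<cdot> ?h" unfolding star_idem[OF hE] hE[unfolded mem_idems] .
  have h_star: "?h \<cdot> star u \<cdot> y = ?h"
  proof -
    have "?h = star ?h" by (rule star_idem[OF hE, symmetric])
    also have "\<dots> = star (star y \<cdot> u \<cdot> ?h)" by (rule arg_cong[OF h_eq])
    also have "\<dots> = ?h \<cdot> star u \<cdot> y" by (simp add: star_mult star_star star_idem[OF hE] assoc)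
    finally show ?thesis by (rule sym)
  qed
  define t where "t = u \<cdot> ?h"
  have "y \<cdot> star y \<cdot> t = y \<cdot> (star y \<cdot> u \<cdot> ?h)" unfolding t_def by (simp add: assoc)
  also have "\<dots> = y" unfolding h_eq[symmetric] by (rule star_cancel(1))
  finally have y_t: "intr_le m y t" using le_idem_mult[OF mult_star_self_idem, of y t] by simp
  have "t \<cdot> star t \<cdot> y = u \<cdot> (?h \<cdot> star u \<cdot> y)"
    unfolding t_def by (simp add: star_mult star_star star_idem[OF hE] assoc star_cancel)
  also have "\<dots> = t" unfolding t_def h_star ..
  finally have "intr_le m t y" using le_idem_mult[OF mult_star_self_idem, of t y] by simp
  with y_t have "y = t" by (rule le_antisym)
  moreover have "intr_le m t u" unfolding t_def by (rule le_mult_idem[OF hE])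
  ultimately show "intr_le m y u" by simp
qed

lemma star_mult_self_of_mult:
  "star (t \<cdot> s) \<cdot> (t \<cdot> s) = star s \<cdot> (star t \<cdot> t \<cdot> (s \<cdot> star s)) \<cdot> s"
  by (simp add: star_mult assoc star_cancel)

lemma sup_star_mult_self_mult_right:
  assumes mc: "meet_continuous m"
    and dir: "directed_by (intr_le m) D" and x: "is_sup_in (intr_le m) UNIV D x"
  shows "is_sup_in (intr_le m) (idems m)
    ((\<lambda>d. star d \<cdot> d) ` (\<lambda>d. d \<cdot> s) ` D) (star (x \<cdot> s) \<cdot> (x \<cdot> s))"
proof -
  let ?src = "\<lambda>d. star d \<cdot> d" and ?\<epsilon> = "s \<cdot> star s"
  have src_idems: "?src ` D \<subseteq> idems m" using star_mult_self_idem by blast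
  have "directed_by (intr_le m) (?src ` D)"
    using dir by (rule directed_by_image) (rule le_star_mult_self)
  then have sup_\<epsilon>: "is_sup_in (intr_le m) (idems m) ((\<lambda>f. f \<cdot> ?\<epsilon>) ` ?src ` D) (?src x \<cdot> ?\<epsilon>)"
    using mc src_idems sup_star_mult_self[OF x] mult_star_self_idem
    unfolding meet_continuous_def by blast
  have "(\<lambda>f. f \<cdot> ?\<epsilon>) ` ?src ` D \<subseteq> idems m"
    using idems_mult_closed[OF _ mult_star_self_idem] src_idems by blast
  moreover have "intr_le m f ?\<epsilon>" if "f \<in> (\<lambda>f. f \<cdot> ?\<epsilon>) ` ?src ` D" for f
    using that idems_commute[OF star_mult_self_idem mult_star_self_idem]
      le_mult_idem[OF star_mult_self_idem] by auto
  ultimately have "is_sup_in (intr_le m) (idems m)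
      ((\<lambda>f. star s \<cdot> f \<cdot> s) ` (\<lambda>f. f \<cdot> ?\<epsilon>) ` ?src ` D) (star s \<cdot> (?src x \<cdot> ?\<epsilon>) \<cdot> s)"
    using sup_\<epsilon> by (rule conj_sup_idems)
  moreover have "(\<lambda>f. star s \<cdot> f \<cdot> s) ` (\<lambda>f. f \<cdot> ?\<epsilon>) ` ?src ` D = ?src ` (\<lambda>d. d \<cdot> s) ` D"
    unfolding image_image using star_mult_self_of_mult[symmetric] by (rule image_cong[OF refl])
  moreover have "star s \<cdot> (?src x \<cdot> ?\<epsilon>) \<cdot> s = ?src (x \<cdot> s)"
    by (rule star_mult_self_of_mult[symmetric])
  ultimately show ?thesis by (simp only:)
qed

lemma sup_mult_right:
  assumes mirror: "mirror_semigroup m" and mc: "meet_continuous m"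
    and dir: "directed_by (intr_le m) D" and x: "is_sup_in (intr_le m) UNIV D x"
  shows "is_sup_in (intr_le m) UNIV ((\<lambda>d. d \<cdot> s) ` D) (x \<cdot> s)"
proof -
  let ?src = "\<lambda>d. star d \<cdot> d"
  have "directed_by (intr_le m) ((\<lambda>d. d \<cdot> s) ` D)"
    using dir by (rule directed_by_image) (rule le_mult_right)
  then have "directed_by (intr_le m) (?src ` (\<lambda>d. d \<cdot> s) ` D)"
    by (rule directed_by_image) (rule le_star_mult_self)
  moreover have "?src ` (\<lambda>d. d \<cdot> s) ` D \<subseteq> idems m" using star_mult_self_idem by blast
  ultimately have "is_sup_in (intr_le m) UNIV (?src ` (\<lambda>d. d \<cdot> s) ` D) (?src (x \<cdot> s))"
    using sup_in_idems_is_sup[OF mirror] sup_star_mult_self_mult_right[OF mc dir x] by blast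
  moreover have "\<forall>e\<in>(\<lambda>d. d \<cdot> s) ` D. intr_le m e (x \<cdot> s)"
    using is_sup_in_upper[OF x] le_mult_right by blast
  ultimately show ?thesis using sup_if_sup_star_mult_self by blast
qed

lemma sep_scott_continuous_if_meet_continuous:
  "mirror_semigroup m \<Longrightarrow> meet_continuous m \<Longrightarrow> sep_scott_continuous m"
  unfolding sep_scott_continuous_def using sup_mult_right by blast

lemma meet_continuous_if_sep_scott_continuous:
  assumes mirror: "mirror_semigroup m" and ssc: "sep_scott_continuous m"
  shows "meet_continuous m"
  unfolding meet_continuous_def
proof (intro allI impI, elim conjE)
  fix \<Delta> x e
  assume \<Delta>: "\<Delta> \<subseteq> idems m" "directed_by (intr_le m) \<Delta>"
    and x: "is_sup_in (intr_le m) (idems m) \<Delta> x" and e: "e \<in> idems m"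
  have "is_sup_in (intr_le m) UNIV \<Delta> x" using sup_in_idems_is_sup[OF mirror \<Delta> x] .
  then have "is_sup_in (intr_le m) UNIV ((\<lambda>d. d \<cdot> e) ` \<Delta>) (x \<cdot> e)"
    using ssc \<Delta> unfolding sep_scott_continuous_def by blast
  moreover have "x \<cdot> e \<in> idems m" by (rule idems_mult_closed[OF is_sup_in_mem[OF x] e])
  ultimately show "is_sup_in (intr_le m) (idems m) ((\<lambda>d. d \<cdot> e) ` \<Delta>) (x \<cdot> e)"
    by (rule is_sup_in_restrict)
qed

end

theorem proposition4p1:
  fixes m :: "'a \<Rightarrow> 'a \<Rightarrow> 'a"
  assumes "inverse_semigroup m"
    and "mirror_semigroup m"
  shows "sep_scott_continuous m \<longleftrightarrow> meet_continuous m"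
proof -
  interpret inverse_semigrp m by (rule inverse_semigrp.intro) (rule assms(1))
  show ?thesis
    using assms(2) meet_continuous_if_sep_scott_continuous
      sep_scott_continuous_if_meet_continuous by blast
qed

end
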